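(* Let $H^0(\mathcal A_\theta^{alg},{}_{\omega}\mathcal A_\theta^{alg\ast})$ be the space of formal series $\varphi=\sum_{(n,m)\in\mathbb Z^2}\varphi_{n,m}U_1^nU_2^m$ satisfying $(\omega\cdot a)\varphi=\varphi a$ for all $a\in\mathcal A_\theta^{alg}$. Then every such $\varphi$ is determined by the three coefficients $\varphi_{0,0},\varphi_{0,1},\varphi_{0,-1}$ (which generate the space), and its coefficients satisfy: if $m-n\equiv 0\pmod 3$ then $\varphi_{n,m}=\lambda^{\frac{m^2+n^2+4mn}{6}}\varphi_{0,0}$; if $m-n\equiv\pm1\pmod 3$ then $\varphi_{n,m}=\lambda^{\frac{m^2+n^2+4mn-1}{6}}\varphi_{0,\pm1}$.
   Context: Let $\theta\in\mathbb R\setminus\mathbb Q$, $\lambda=e^{2\pi i\theta}$, and $\lambda^s:=e^{2\pi i\theta s}$ for $s\in\mathbb R$. $\mathcal A_\theta^{alg}$ is the complex algebra of finite sums $\sum a_{n,m}U_1^nU_2^m$ with $U_1,U_2$ invertible and $U_2U_1=\lambda U_1U_2$. $\mathcal A_\theta^{alg\ast}$ denotes the space of all formal series $\sum_{(n,m)\in\mathbb Z^2}\varphi_{n,m}U_1^nU_2^m$ (arbitrary complex coefficients); it is an $\mathcal A_\theta^{alg}$-bimodule via left and right multiplication by elements of $\mathcal A_\theta^{alg}$ using the relation $U_2U_1=\lambda U_1U_2$. $\omega$ denotes the automorphism of $\mathcal A_\theta^{alg}$ with $\omega\cdot U_1=U_2^{-1}$, $\omega\cdot U_2=\lambda^{-1/2}U_1U_2^{-1}$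 (the action of $\begin{pmatrix}0&1\\-1&-1\end{pmatrix}\in SL(2,\mathbb Z)$). ${}_\omega\mathcal A_\theta^{alg\ast}$ is $\mathcal A_\theta^{alg\ast}$ with bimodule structure $a\cdot\varphi=(\omega\cdot a)\varphi$, $\varphi\cdot a=\varphi a$. *)

theory Defs
  imports Complex_Main
begin

text \<open>Elements of the noncommutative torus algebra and formal series are both
represented by their coefficient functions on the monomial basis
U1^n U2^m, indexed by (n,m) in Z x Z.\<close>

type_synonym series = "int \<times> int \<Rightarrow> complex"

text \<open>lambda^s = exp(2 pi i theta s)\<close>
definition lam :: "real \<Rightarrow> real \<Rightarrow> complex" where
  "lam \<theta> s = cis (2 * pi * \<theta> * s)"

definition supp :: "series \<Rightarrow> (int \<times> int) set" where
  "supp a = {p. a p \<noteq> 0}"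

definition Aalg :: "series set" where
  "Aalg = {a. finite (supp a)}"

definition monom :: "int \<times> int \<Rightarrow> complex \<Rightarrow> series" where
  "monom p c = (\<lambda>q. if q = p then c else 0)"

definition U1 :: series where "U1 = monom (1, 0) 1"
definition U2 :: series where "U2 = monom (0, 1) 1"
definition U2inv :: series where "U2inv = monom (0, -1) 1"

text \<open>Left multiplication of a (series) phi by a finitely supported a, using
  U1^a U2^b U1^c U2^d = lambda^(b c) U1^(a+c) U2^(b+d) (from U2 U1 = lambda U1 U2).
  Also serves as the product of the algebra.\<close>
definition lmul :: "real \<Rightarrow> series \<Rightarrow> series \<Rightarrow> series" where
  "lmul \<theta> a \<phi> = (\<lambda>k. \<Sum>p\<in>supp a.
      a p * \<phi> (fst k - fst p, snd k - snd p) * lam \<theta> (of_int (snd p * (fst k - fst p))))"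

definition rmul :: "real \<Rightarrow> series \<Rightarrow> series \<Rightarrow> series" where
  "rmul \<theta> \<phi> a = (\<lambda>k. \<Sum>q\<in>supp a.
      \<phi> (fst k - fst q, snd k - snd q) * a q * lam \<theta> (of_int ((snd k - snd q) * fst q)))"

definition is_omega :: "real \<Rightarrow> (series \<Rightarrow> series) \<Rightarrow> bool" where
  "is_omega \<theta> \<omega> \<longleftrightarrow>
     (\<forall>a\<in>Aalg. \<omega> a \<in> Aalg) \<and>
     (\<forall>a\<in>Aalg. \<forall>b\<in>Aalg. \<omega> (\<lambda>k. a k + b k) = (\<lambda>k. \<omega> a k + \<omega> b k)) \<and>
     (\<forall>a\<in>Aalg. \<forall>c. \<omega> (\<lambda>k. c * a k) = (\<lambda>k. c * \<omega> a k)) \<and>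
     (\<forall>a\<in>Aalg. \<forall>b\<in>Aalg. \<omega> (lmul \<theta> a b) = lmul \<theta> (\<omega> a) (\<omega> b)) \<and>
     bij_betw \<omega> Aalg Aalg \<and>
     \<omega> U1 = U2inv \<and>
     \<omega> U2 = (\<lambda>k. lam \<theta> (-1/2) * lmul \<theta> U1 U2inv k)"

definition H0 :: "real \<Rightarrow> (series \<Rightarrow> series) \<Rightarrow> series set" where
  "H0 \<theta> \<omega> = {\<phi>. \<forall>a\<in>Aalg. lmul \<theta> (\<omega> a) \<phi> = rmul \<theta> \<phi> a}"

end

theory Submission
  imports Defs
begin

text \<open>Testing the defining relation of H0 on the generators U1 and U2 gives the two recurrences
  phi(n+1,m+1) = lambda^(n+m+1) phi(n,m) and phi(n+1,m-2) = lambda^(-1/2-n) phi(n,m).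
  The quadratic phase Q(n,m) = (m^2+n^2+4mn)/6 solves both, so lambda^(-Q) phi is invariant
  under the lattice spanned by (1,1) and (1,-2). This lattice has index 3 in Z x Z, with
  cosets determined by m - n mod 3 and represented by (0,0), (0,1), (0,-1).\<close>

lemma lam_add: "lam t (s + r) = lam t s * lam t r"
  unfolding lam_def by (simp add: cis_mult distrib_left)

lemma lam_zero [simp]: "lam t 0 = 1"
  unfolding lam_def by simp

lemma supp_monom: "c \<noteq> 0 \<Longrightarrow> supp (monom p c) = {p}"
  unfolding supp_def monom_def by auto

lemma monom_in_Aalg: "monom p c \<in> Aalg"
  unfolding Aalg_def supp_def monom_def by (auto intro: finite_subset[of _ "{p}"])

lemma lmul_monom:
  "lmul \<theta> (monom p c) \<phi> k =
     c * \<phi> (fst k - fst p, snd k - snd p) * lam \<theta> (of_int (snd p * (fst k - fst p)))"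
  by (cases "c = 0") (simp_all add: lmul_def supp_monom monom_def, simp add: supp_def)

lemma rmul_monom:
  "rmul \<theta> \<phi> (monom q c) k =
     \<phi> (fst k - fst q, snd k - snd q) * c * lam \<theta> (of_int ((snd k - snd q) * fst q))"
  by (cases "c = 0") (simp_all add: rmul_def supp_monom monom_def, simp add: supp_def)

lemma is_omega_U1: "is_omega \<theta> \<omega> \<Longrightarrow> \<omega> U1 = monom (0, -1) 1"
  unfolding is_omega_def U2inv_def by simp

lemma is_omega_U2:
  assumes "is_omega \<theta> \<omega>"
  shows "\<omega> U2 = monom (1, -1) (lam \<theta> (-1/2))"
proof -
  have "\<omega> U2 = (\<lambda>k. lam \<theta> (-1/2) * lmul \<theta> (monom (1, 0) 1) (monom (0, -1) 1) k)"
    using assms unfolding is_omega_def U1_def U2inv_def by simp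
  then show ?thesis
    unfolding lmul_monom by (auto simp: monom_def)
qed

lemma H0_monom:
  assumes "\<phi> \<in> H0 \<theta> \<omega>"
  shows "lmul \<theta> (\<omega> (monom p c)) \<phi> = rmul \<theta> \<phi> (monom p c)"
  using assms monom_in_Aalg unfolding H0_def by blast

lemma H0_step_diagonal:
  assumes "is_omega \<theta> \<omega>" and "\<phi> \<in> H0 \<theta> \<omega>"
  shows "\<phi> (n + 1, m + 1) = lam \<theta> (of_int (n + m + 1)) * \<phi> (n, m)"
proof -
  have "lmul \<theta> (monom (0, -1) 1) \<phi> (n + 1, m) = rmul \<theta> \<phi> (monom (1, 0) 1) (n + 1, m)"
    using H0_monom[OF assms(2), of "(1, 0)" 1] is_omega_U1[OF assms(1)] unfolding U1_def by simp
  then have "\<phi> (n + 1, m + 1) * lam \<theta> (- of_int (n + 1)) = \<phi> (n, m) * lam \<theta> (of_int m)"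
    by (simp add: lmul_monom rmul_monom)
  then have "\<phi> (n + 1, m + 1) * lam \<theta> (- of_int (n + 1)) * lam \<theta> (of_int (n + 1))
      = \<phi> (n, m) * lam \<theta> (of_int m) * lam \<theta> (of_int (n + 1))"
    by simp
  then show ?thesis
    by (simp add: mult.assoc lam_add[symmetric] add_ac)
qed

lemma H0_step_antidiagonal:
  assumes "is_omega \<theta> \<omega>" and "\<phi> \<in> H0 \<theta> \<omega>"
  shows "\<phi> (n + 1, m - 2) = lam \<theta> (- 1/2 - of_int n) * \<phi> (n, m)"
proof -
  have "lmul \<theta> (monom (1, -1) (lam \<theta> (-1/2))) \<phi> (n + 1, m - 1)
      = rmul \<theta> \<phi> (monom (0, 1) 1) (n + 1, m - 1)"
    using H0_monom[OF assms(2), of "(0, 1)" 1] is_omega_U2[OF assms(1)] unfolding U2_def by simp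
  then have "\<phi> (n + 1, m - 2) = lam \<theta> (- 1/2) * \<phi> (n, m) * lam \<theta> (- of_int n)"
    by (simp add: lmul_monom rmul_monom)
  also have "\<dots> = (lam \<theta> (- 1/2) * lam \<theta> (- of_int n)) * \<phi> (n, m)"
    by (simp only: ac_simps)
  finally show ?thesis
    by (simp add: lam_add[symmetric])
qed

definition phase :: "int \<Rightarrow> int \<Rightarrow> real" where
  "phase n m = of_int (m^2 + n^2 + 4*m*n) / 6"

lemma phase_step_diagonal: "phase (n + 1) (m + 1) = phase n m + of_int (n + m + 1)"
  unfolding phase_def by (simp add: field_simps power2_eq_square)

lemma phase_step_antidiagonal: "phase (n + 1) (m - 2) = phase n m + (- 1/2 - of_int n)"
  unfolding phase_def by (simp add: field_simps power2_eq_square)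

lemma translation_invariant_multiple:
  fixes h :: "int \<Rightarrow> int \<Rightarrow> 'a"
  assumes "\<And>x y. h (x + u) (y + v) = h x y"
  shows "h (x + a * u) (y + a * v) = h x y"
proof (induction a rule: int_induct[where k = 0])
  case (step1 i)
  then show ?case
    using assms[of "x + i * u" "y + i * v"] by (simp add: algebra_simps)
next
  case (step2 i)
  then show ?case
    using assms[of "x + (i - 1) * u" "y + (i - 1) * v"] by (simp add: algebra_simps)
qed simp

lemma invariant_index3_lattice:
  fixes h :: "int \<Rightarrow> int \<Rightarrow> 'a"
  assumes "\<And>x y. h (x + 1) (y + 1) = h x y"
    and "\<And>x y. h (x + 1) (y + -2) = h x y"
    and "m - n = 3 * k + r"
  shows "h n m = h 0 r"
proof -
  have "h (0 + (n + k) * 1 + (- k) * 1) (r + (n + k) * 1 + (- k) * -2)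
      = h (0 + (n + k) * 1) (r + (n + k) * 1)"
    by (rule translation_invariant_multiple[where h = h, OF assms(2)])
  also have "\<dots> = h 0 r"
    by (rule translation_invariant_multiple[where h = h, OF assms(1)])
  finally show ?thesis
    using assms(3) by (simp add: algebra_simps)
qed

lemma H0_coeff_eq:
  assumes "is_omega \<theta> \<omega>" and "\<phi> \<in> H0 \<theta> \<omega>" and "m - n = 3 * k + r"
  shows "\<phi> (n, m) = lam \<theta> (phase n m - phase 0 r) * \<phi> (0, r)"
proof -
  define \<psi> where "\<psi> x y = lam \<theta> (- phase x y) * \<phi> (x, y)" for x y
  have "\<psi> (x + 1) (y + 1) = \<psi> x y" for x y
    unfolding \<psi>_def H0_step_diagonal[OF assms(1,2)] phase_step_diagonal
    by (simp add: lam_add[symmetric])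
  moreover have "\<psi> (x + 1) (y + -2) = \<psi> x y" for x y
    using H0_step_antidiagonal[OF assms(1,2)]
    unfolding \<psi>_def by (simp add: phase_step_antidiagonal lam_add[symmetric])
  ultimately have "\<psi> n m = \<psi> 0 r"
    by (rule invariant_index3_lattice[OF _ _ assms(3)])
  have "\<phi> (n, m) = lam \<theta> (phase n m) * \<psi> n m"
    unfolding \<psi>_def by (simp add: mult.assoc[symmetric] lam_add[symmetric])
  also have "\<dots> = lam \<theta> (phase n m) * lam \<theta> (- phase 0 r) * \<phi> (0, r)"
    unfolding \<open>\<psi> n m = \<psi> 0 r\<close> unfolding \<psi>_def by (simp add: mult.assoc)
  finally show ?thesis
    by (simp add: lam_add[symmetric])
qed

text \<open>Only omega U1 and omega U2 enter the proof.\<close>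
theorem mainTheorem3:
  fixes \<theta> :: real and \<omega> :: "series \<Rightarrow> series" and \<phi> :: series
  assumes "\<theta> \<notin> \<rat>"
    and "is_omega \<theta> \<omega>"
    and "\<phi> \<in> H0 \<theta> \<omega>"
  shows "\<forall>n m :: int.
     ((m - n) mod 3 = 0 \<longrightarrow>
        \<phi> (n, m) = lam \<theta> (of_int (m^2 + n^2 + 4*m*n) / 6) * \<phi> (0, 0)) \<and>
     ((m - n) mod 3 = 1 \<longrightarrow>
        \<phi> (n, m) = lam \<theta> (of_int (m^2 + n^2 + 4*m*n - 1) / 6) * \<phi> (0, 1)) \<and>
     ((m - n) mod 3 = 2 \<longrightarrow>
        \<phi> (n, m) = lam \<theta> (of_int (m^2 + n^2 + 4*m*n - 1) / 6) * \<phi> (0, -1))"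
proof (intro allI conjI impI)
  fix n m :: int
  note coeff = H0_coeff_eq[OF assms(2,3)]
  define k where "k = (m - n) div 3"
  have residue: "m - n = 3 * k + (m - n) mod 3"
    unfolding k_def by simp
  have phase_offset: "of_int (m^2 + n^2 + 4*m*n - 1) / 6 = phase n m - 1/6"
    unfolding phase_def by (simp add: diff_divide_distrib)
  show "\<phi> (n, m) = lam \<theta> (of_int (m^2 + n^2 + 4*m*n) / 6) * \<phi> (0, 0)"
    if "(m - n) mod 3 = 0"
    using coeff[of m n k 0] residue that by (simp add: phase_def)
  show "\<phi> (n, m) = lam \<theta> (of_int (m^2 + n^2 + 4*m*n - 1) / 6) * \<phi> (0, 1)"
    if "(m - n) mod 3 = 1"
    unfolding phase_offset using coeff[of m n k 1] residue that by (simp add: phase_def)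
  show "\<phi> (n, m) = lam \<theta> (of_int (m^2 + n^2 + 4*m*n - 1) / 6) * \<phi> (0, -1)"
    if "(m - n) mod 3 = 2"
    unfolding phase_offset using coeff[of m n "k + 1" "-1"] residue that by (simp add: phase_def)
qed

end
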